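(* For any $q\in(1/2,1)$ and integers $K\ge1$, $1\le C\le K/2$, we have $\lambda^*(q,K,C)>1-\frac{1}{2q}$. Moreover, for any fixed $q\in(1/2,1)$ and any $\overline{\lambda}>1-\frac{1}{2q}$, there exist $\underline{K},\underline{C}$ such that whenever $K\ge\underline{K}$ and $C\ge\underline{C}$ (with $C\le K/2$), we have $\lambda^*(q,K,C)\le\overline{\lambda}$.
   Context: For parameters $q\in(1/2,1)$, integers $K\ge1$, $1\le C\le K/2$, and $\lambda\in[0,1]$, let $P_k(x,\lambda)=\mathbb{P}[\mathrm{Binom}(K,\lambda x+(1-\lambda)q)=k]$ for $x\in[0,1]$, and define the majority-rule inflow accuracy function $$\phi_{\sigma^{\mathrm{maj}}}(x)=\frac{q+C\sum_{k>K/2}P_k(x,\lambda)+qC\,P_{K/2}(x,\lambda)}{1+C},$$ where the $P_{K/2}$ term is present only when $K$ is even. (This is the expected fraction of new popularity score going to correct stories when agents share $C$ stories of their size-$K$ news-feed majority, breaking ties by their own story, and post their own story of precision $q$.) The critical virality weight is $\lambda^*(q,K,C)=\inf\{\lambda\in[0,1]:\phi_{\sigma^{\mathrm{maj}}}(x)=x\text{ for some }x\in[0,1/2]\}$, with $\lambda^*=\infty$ if the set is empty. *)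

theory Defs
  imports "HOL-Analysis.Analysis" "HOL-Library.Extended_Real"
begin

definition binom_pmf :: "nat \<Rightarrow> real \<Rightarrow> nat \<Rightarrow> real" where
  "binom_pmf K p k = real (K choose k) * p ^ k * (1 - p) ^ (K - k)"

definition Pk :: "real \<Rightarrow> nat \<Rightarrow> real \<Rightarrow> nat \<Rightarrow> real \<Rightarrow> real" where
  "Pk q K lam k x = binom_pmf K (lam * x + (1 - lam) * q) k"

definition phi_maj :: "real \<Rightarrow> nat \<Rightarrow> nat \<Rightarrow> real \<Rightarrow> real \<Rightarrow> real" where
  "phi_maj q K C lam x =
     (q + real C * (\<Sum>k\<in>{k. k \<le> K \<and> K < 2 * k}. Pk q K lam k x)
        + (if even K then q * real C * Pk q K lam (K div 2) x else 0))
     / (1 + real C)"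

definition lambda_star :: "real \<Rightarrow> nat \<Rightarrow> nat \<Rightarrow> ereal" where
  "lambda_star q K C =
     (let S = {lam \<in> {0..1}. \<exists>x\<in>{0..1/2}. phi_maj q K C lam x = x}
      in if S = {} then \<infinity> else ereal (Inf S))"

end

theory Submission
  imports Defs
begin

(*
  Write p = lam x + (1 - lam) q for the precision of a news-feed story. If lam <= 1 - 1/(2q),
  then p >= 1/2 for every x in [0, 1/2]; the reflection k |-> K - k of Binom(K, p) then shows
  that the majority is right with probability at least 1/2 (ties counting half), so
  phi(x) > 1/2 >= x and there is no fixed point. The set of weights admitting a fixed point
  is compact, hence its infimum lies strictly above 1 - 1/(2q).

  Conversely, any lam slightly above the threshold admits an x > 0 with p < 1/2. By the
  Chernoff-type bound P[Binom(K, p) >= K/2] <= (2 sqrt (p (1 - p)))^K, the majority term of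
  phi(x) vanishes as K grows, and the own-story term q/(1 + C) vanishes as C grows, so
  phi(x) < x while phi(0) >= 0; the intermediate value theorem gives a fixed point.
*)

definition majority_mass :: "nat \<Rightarrow> real \<Rightarrow> real" where
  "majority_mass K p = (\<Sum>k\<in>{k. k \<le> K \<and> K < 2 * k}. binom_pmf K p k)"

definition minority_mass :: "nat \<Rightarrow> real \<Rightarrow> real" where
  "minority_mass K p = (\<Sum>k\<in>{k. 2 * k < K}. binom_pmf K p k)"

definition tie_mass :: "nat \<Rightarrow> real \<Rightarrow> real" where
  "tie_mass K p = (if even K then binom_pmf K p (K div 2) else 0)"

lemma binom_pmf_nonneg: "0 \<le> p \<Longrightarrow> p \<le> 1 \<Longrightarrow> 0 \<le> binom_pmf K p k"
  unfolding binom_pmf_def by simp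

lemma sum_binom_pmf: "(\<Sum>k\<le>K. binom_pmf K p k) = 1"
  using binomial_ring[of p "1 - p" K] by (simp add: binom_pmf_def mult.assoc)

lemma majority_mass_nonneg: "0 \<le> p \<Longrightarrow> p \<le> 1 \<Longrightarrow> 0 \<le> majority_mass K p"
  unfolding majority_mass_def by (intro sum_nonneg binom_pmf_nonneg)

lemma tie_mass_nonneg: "0 \<le> p \<Longrightarrow> p \<le> 1 \<Longrightarrow> 0 \<le> tie_mass K p"
  unfolding tie_mass_def by (simp add: binom_pmf_nonneg)

lemma majority_minority_tie_sum: "majority_mass K p + minority_mass K p + tie_mass K p = 1"
proof -
  let ?A = "{k. k \<le> K \<and> K < 2 * k}" and ?B = "{k. 2 * k < K}"
    and ?T = "if even K then {K div 2} else {}"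
  have fin: "finite ?A" "finite ?B"
    by (auto intro: finite_subset[of _ "{..K}"])
  have "{..K} = ?A \<union> ?B \<union> ?T" by (auto; presburger)
  then have "1 = (\<Sum>k\<in>?A \<union> ?B \<union> ?T. binom_pmf K p k)"
    using sum_binom_pmf by metis
  also have "\<dots> = majority_mass K p + minority_mass K p + tie_mass K p"
    unfolding majority_mass_def minority_mass_def tie_mass_def
    using fin by (subst sum.union_disjoint; auto)+
  finally show ?thesis ..
qed

lemma binom_pmf_le_mirror:
  assumes "1/2 \<le> p" "p \<le> 1" "2 * k \<le> K"
  shows "binom_pmf K p k \<le> binom_pmf K p (K - k)"
proof -
  define d where "d = K - 2 * k"
  have K: "K - k = k + d" "K - (k + d) = k" using assms(3) unfolding d_def by auto
  have choose: "K choose (K - k) = K choose k"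
    using binomial_symmetric[of k K] assms(3) by simp
  have "p ^ k * (1 - p) ^ (k + d) = (p * (1 - p)) ^ k * (1 - p) ^ d"
    by (simp add: power_add power_mult_distrib)
  also have "\<dots> \<le> (p * (1 - p)) ^ k * p ^ d"
    using assms by (intro mult_left_mono power_mono) auto
  also have "\<dots> = p ^ (k + d) * (1 - p) ^ k"
    by (simp add: power_add power_mult_distrib)
  finally show ?thesis
    unfolding binom_pmf_def choose unfolding K by (simp add: mult.assoc mult_left_mono)
qed

lemma minority_le_majority:
  assumes "1/2 \<le> p" "p \<le> 1"
  shows "minority_mass K p \<le> majority_mass K p"
proof -
  let ?B = "{k. 2 * k < K}"
  have "minority_mass K p \<le> (\<Sum>k\<in>?B. binom_pmf K p (K - k))"
    unfolding minority_mass_def using assms by (intro sum_mono binom_pmf_le_mirror) auto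
  also have "\<dots> = (\<Sum>k\<in>(\<lambda>k. K - k) ` ?B. binom_pmf K p k)"
    by (subst sum.reindex) (auto intro!: inj_onI)
  also have "(\<lambda>k. K - k) ` ?B = {k. k \<le> K \<and> K < 2 * k}"
  proof (intro equalityI subsetI)
    fix k assume "k \<in> {k. k \<le> K \<and> K < 2 * k}"
    then have "K - k \<in> ?B" "k = K - (K - k)" by auto
    then show "k \<in> (\<lambda>k. K - k) ` ?B" by blast
  qed auto
  finally show ?thesis unfolding majority_mass_def .
qed

lemma binom_term_le_sqrt_power:
  assumes "0 \<le> p" "p \<le> 1/2" "K \<le> 2 * k" "k \<le> K"
  shows "p ^ k * (1 - p) ^ (K - k) \<le> sqrt (p * (1 - p)) ^ K"
proof -
  define s where "s = sqrt (p * (1 - p))"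
  define d where "d = 2 * k - K"
  have K: "k = (K - k) + d" "K = 2 * (K - k) + d" using assms(3,4) unfolding d_def by auto
  have s: "0 \<le> s" "s\<^sup>2 = p * (1 - p)" unfolding s_def using assms(1,2) by auto
  have "p \<le> s"
    unfolding s_def using assms(1,2)
    by (intro real_le_rsqrt) (auto simp: power2_eq_square intro!: mult_left_mono)
  have "p ^ k * (1 - p) ^ (K - k) = (p * (1 - p)) ^ (K - k) * p ^ d"
    by (subst K(1)) (simp add: power_add power_mult_distrib)
  also have "\<dots> \<le> (s\<^sup>2) ^ (K - k) * s ^ d"
    unfolding s(2) using assms(1,2) s(1) \<open>p \<le> s\<close> by (intro mult_left_mono power_mono) auto
  also have "\<dots> = s ^ (2 * (K - k) + d)" by (simp add: power_add power_mult)
  also have "\<dots> = s ^ K" using K(2) by simp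
  finally show ?thesis unfolding s_def .
qed

lemma majority_plus_tie_le:
  assumes "0 \<le> p" "p \<le> 1/2"
  shows "majority_mass K p + tie_mass K p \<le> (2 * sqrt (p * (1 - p))) ^ K"
proof -
  let ?A = "{k. k \<le> K \<and> K < 2 * k}" and ?T = "if even K then {K div 2} else {}"
  let ?s = "sqrt (p * (1 - p))"
  have "majority_mass K p + tie_mass K p = (\<Sum>k\<in>?A \<union> ?T. binom_pmf K p k)"
    unfolding majority_mass_def tie_mass_def
    by (subst sum.union_disjoint) (auto intro: finite_subset[of _ "{..K}"])
  also have "\<dots> \<le> (\<Sum>k\<in>?A \<union> ?T. real (K choose k) * ?s ^ K)"
    unfolding binom_pmf_def using assms
    by (intro sum_mono) (auto simp: mult.assoc split: if_splits
        intro!: mult_left_mono binom_term_le_sqrt_power)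
  also have "\<dots> \<le> (\<Sum>k\<le>K. real (K choose k) * ?s ^ K)"
    using assms by (intro sum_mono2) auto
  also have "\<dots> = (2 * ?s) ^ K"
    by (simp flip: sum_distrib_right of_nat_sum add: choose_row_sum power_mult_distrib)
  finally show ?thesis .
qed

lemma majority_plus_tie_tendsto_zero:
  assumes "0 \<le> p" "p < 1/2"
  shows "(\<lambda>K. majority_mass K p + tie_mass K p) \<longlonglongrightarrow> 0"
proof (rule tendsto_sandwich[where f = "\<lambda>_. 0" and h = "\<lambda>K. (2 * sqrt (p * (1 - p))) ^ K"])
  have "p * (1 - p) < 1/4"
  proof -
    have "0 < (1/2 - p)\<^sup>2" using assms by simp
    then show ?thesis by (simp add: power2_eq_square algebra_simps)
  qed
  then have "2 * sqrt (p * (1 - p)) < 1"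
    using real_sqrt_less_iff[of "p * (1 - p)" "1/4"] by (simp add: real_sqrt_divide)
  then show "(\<lambda>K. (2 * sqrt (p * (1 - p))) ^ K) \<longlonglongrightarrow> 0"
    using assms by (intro LIMSEQ_power_zero) simp
  show "\<forall>\<^sub>F K in sequentially. 0 \<le> majority_mass K p + tie_mass K p"
    using assms by (intro always_eventually allI add_nonneg_nonneg majority_mass_nonneg
        tie_mass_nonneg) auto
  show "\<forall>\<^sub>F K in sequentially. majority_mass K p + tie_mass K p \<le> (2 * sqrt (p * (1 - p))) ^ K"
    using assms by (intro always_eventually allI majority_plus_tie_le) auto
qed simp

lemma majority_plus_half_tie_ge_half:
  assumes "1/2 \<le> p" "p \<le> 1"
  shows "1/2 \<le> majority_mass K p + tie_mass K p / 2"
  using minority_le_majority[OF assms, of K] majority_minority_tie_sum[of K p] by linarith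

lemma phi_maj_eq:
  "phi_maj q K C lam x = (q + real C * (majority_mass K (lam * x + (1 - lam) * q)
     + q * tie_mass K (lam * x + (1 - lam) * q))) / (1 + real C)"
  unfolding phi_maj_def majority_mass_def tie_mass_def Pk_def by (simp add: algebra_simps)

lemma phi_maj_gt_half:
  assumes "1/2 < q" "1/2 \<le> lam * x + (1 - lam) * q" "lam * x + (1 - lam) * q \<le> 1"
  shows "1/2 < phi_maj q K C lam x"
proof -
  let ?p = "lam * x + (1 - lam) * q"
  have "1/2 * tie_mass K ?p \<le> q * tie_mass K ?p"
    using assms tie_mass_nonneg[of ?p K] by (intro mult_right_mono) auto
  then have "1/2 \<le> majority_mass K ?p + q * tie_mass K ?p"
    using majority_plus_half_tie_ge_half[of ?p K] assms(2,3) by linarith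
  then have "(q + real C * (1/2)) / (1 + real C) \<le> phi_maj q K C lam x"
    unfolding phi_maj_eq by (intro divide_right_mono add_left_mono mult_left_mono) auto
  moreover have "1/2 < (q + real C * (1/2)) / (1 + real C)"
    using assms(1) by (simp add: field_simps)
  ultimately show ?thesis by linarith
qed

lemma phi_maj_nonneg:
  assumes "0 \<le> q" "0 \<le> lam * x + (1 - lam) * q" "lam * x + (1 - lam) * q \<le> 1"
  shows "0 \<le> phi_maj q K C lam x"
  unfolding phi_maj_eq
  using assms majority_mass_nonneg[OF assms(2,3)] tie_mass_nonneg[OF assms(2,3)]
  by (auto intro!: divide_nonneg_pos add_nonneg_nonneg mult_nonneg_nonneg)

lemma phi_maj_le:
  assumes "0 \<le> q" "q \<le> 1" "0 \<le> lam * x + (1 - lam) * q" "lam * x + (1 - lam) * q \<le> 1"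
  shows "phi_maj q K C lam x
    \<le> q / (1 + real C)
       + (majority_mass K (lam * x + (1 - lam) * q) + tie_mass K (lam * x + (1 - lam) * q))"
proof -
  let ?p = "lam * x + (1 - lam) * q"
  have m: "0 \<le> majority_mass K ?p" "0 \<le> tie_mass K ?p"
    using assms by (auto intro: majority_mass_nonneg tie_mass_nonneg)
  have "phi_maj q K C lam x
      = q / (1 + real C) + real C / (1 + real C) * (majority_mass K ?p + q * tie_mass K ?p)"
    unfolding phi_maj_eq by (simp add: add_divide_distrib)
  also have "\<dots> \<le> q / (1 + real C) + (majority_mass K ?p + q * tie_mass K ?p)"
    using m assms by (intro add_left_mono mult_left_le_one_le) auto
  also have "\<dots> \<le> q / (1 + real C) + (majority_mass K ?p + tie_mass K ?p)"
    using m assms by (simp add: mult_left_le_one_le)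
  finally show ?thesis .
qed

lemma continuous_on_phi_maj [continuous_intros]:
  "continuous_on S f \<Longrightarrow> continuous_on S g \<Longrightarrow> continuous_on S (\<lambda>z. phi_maj q K C (f z) (g z))"
  unfolding phi_maj_def Pk_def binom_pmf_def by (cases "even K") (simp_all add: continuous_intros)

definition fixed_point_weights :: "real \<Rightarrow> nat \<Rightarrow> nat \<Rightarrow> real set" where
  "fixed_point_weights q K C = {lam \<in> {0..1}. \<exists>x\<in>{0..1/2}. phi_maj q K C lam x = x}"

lemma lambda_star_eq:
  "lambda_star q K C = (if fixed_point_weights q K C = {} then \<infinity>
     else ereal (Inf (fixed_point_weights q K C)))"
  unfolding lambda_star_def fixed_point_weights_def by simp

lemma compact_fixed_point_weights: "compact (fixed_point_weights q K C)"
proof -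
  let ?graph = "({0..1} \<times> {0..1/2}) \<inter> {z. phi_maj q K C (fst z) (snd z) = snd z}"
  have "compact ?graph"
    by (intro compact_Int_closed compact_Times compact_Icc closed_Collect_eq continuous_intros)
  then have "compact (fst ` ?graph)"
    by (intro compact_continuous_image continuous_intros)
  moreover have "fst ` ?graph = fixed_point_weights q K C"
    unfolding fixed_point_weights_def by (force simp: image_iff)
  ultimately show ?thesis by simp
qed

lemma lambda_star_gt:
  assumes "\<And>lam x. 0 \<le> lam \<Longrightarrow> lam \<le> c \<Longrightarrow> 0 \<le> x \<Longrightarrow> x \<le> 1/2 \<Longrightarrow> phi_maj q K C lam x \<noteq> x"
  shows "ereal c < lambda_star q K C"
proof (cases "fixed_point_weights q K C = {}")
  case False
  then have "Inf (fixed_point_weights q K C) \<in> fixed_point_weights q K C"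
    using compact_fixed_point_weights
    by (intro closed_contains_Inf compact_imp_closed bounded_imp_bdd_below compact_imp_bounded)
  then have "\<not> Inf (fixed_point_weights q K C) \<le> c"
    using assms unfolding fixed_point_weights_def by auto
  then show ?thesis using False by (simp add: lambda_star_eq)
qed (simp add: lambda_star_eq)

lemma lambda_star_le:
  assumes "0 \<le> q" "q \<le> 1" "0 \<le> lam" "lam \<le> 1" "0 \<le> x" "x \<le> 1/2"
    and "phi_maj q K C lam x \<le> x"
  shows "lambda_star q K C \<le> ereal lam"
proof -
  have "0 \<le> phi_maj q K C lam 0"
    using assms by (intro phi_maj_nonneg) (auto simp: mult_le_one)
  moreover have "continuous_on {0..x} (\<lambda>y. phi_maj q K C lam y - y)"
    by (intro continuous_intros)
  ultimately obtain y where "0 \<le> y" "y \<le> x" "phi_maj q K C lam y - y = 0"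
    using IVT2'[of "\<lambda>y. phi_maj q K C lam y - y" x 0 0] assms by auto
  then have lam: "lam \<in> fixed_point_weights q K C"
    using assms unfolding fixed_point_weights_def by auto
  then have "Inf (fixed_point_weights q K C) \<le> lam"
    by (intro cInf_lower) (auto simp: fixed_point_weights_def bdd_below_def)
  then show ?thesis using lam by (auto simp: lambda_star_eq)
qed

lemma lambda_star_gt_threshold:
  assumes "1/2 < q" "q < 1"
  shows "ereal (1 - 1 / (2 * q)) < lambda_star q K C"
proof (rule lambda_star_gt)
  fix lam x :: real assume lam: "0 \<le> lam" "lam \<le> 1 - 1 / (2 * q)" and x: "0 \<le> x" "x \<le> 1/2"
  have "0 < 1 / (2 * q)" using assms by simp
  then have "lam \<le> 1" using lam(2) by linarith
  have "1/2 = 1 / (2 * q) * q" using assms by simp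
  also have "\<dots> \<le> (1 - lam) * q" using assms lam by (intro mult_right_mono) auto
  finally have "1/2 \<le> lam * x + (1 - lam) * q"
    using mult_nonneg_nonneg[OF lam(1) x(1)] by linarith
  moreover have "lam * x + (1 - lam) * q \<le> lam + (1 - lam)"
    using assms lam x \<open>lam \<le> 1\<close> by (intro add_mono mult_left_le mult_left_le_one_le) auto
  ultimately have "1/2 < phi_maj q K C lam x" using assms by (intro phi_maj_gt_half) auto
  then show "phi_maj q K C lam x \<noteq> x" using x by auto
qed

lemma exists_weight_with_minority_precision:
  fixes q lbar :: real
  assumes "1/2 < q" "q < 1" "1 - 1 / (2 * q) < lbar"
  obtains lam x where "0 \<le> lam" "lam \<le> 1" "lam \<le> lbar" "0 < x" "x \<le> 1/2"
    "lam * x + (1 - lam) * q < 1/2"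
proof -
  define lam where "lam = min lbar 1"
  have "0 < 1 - 1 / (2 * q)" using assms by (simp add: field_simps)
  then have "0 < lbar" using assms(3) by linarith
  then have lam: "0 < lam" "lam \<le> 1" "lam \<le> lbar" "1 - 1 / (2 * q) < lam"
    using assms unfolding lam_def by auto
  define c where "c = (1 - lam) * q"
  have "c < 1 / (2 * q) * q"
    unfolding c_def using assms lam by (intro mult_strict_right_mono) auto
  then have c: "0 \<le> c" "c < 1/2" unfolding c_def using assms lam by auto
  define x where "x = (1/2 - c) / (2 * lam)"
  have "lam * q \<le> lam" using assms lam by (intro mult_left_le) auto
  then have "1/2 - c \<le> lam" unfolding c_def using assms by (simp add: algebra_simps)
  then have "x \<le> 1/2" unfolding x_def using lam by (simp add: field_simps)
  moreover have "lam * x + (1 - lam) * q = (1/2 + c) / 2"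
    unfolding x_def c_def using lam by (simp add: field_simps)
  ultimately show ?thesis
    using that[of lam x] lam c unfolding x_def by auto
qed

lemma lambda_star_le_for_large_K_C:
  fixes q lbar :: real
  assumes "1/2 < q" "q < 1" "1 - 1 / (2 * q) < lbar"
  obtains K0 C0 :: nat where "\<And>K C. K0 \<le> K \<Longrightarrow> C0 \<le> C \<Longrightarrow> lambda_star q K C \<le> ereal lbar"
proof -
  obtain lam x where lam: "0 \<le> lam" "lam \<le> 1" "lam \<le> lbar" and x: "0 < x" "x \<le> 1/2"
    and subcritical: "lam * x + (1 - lam) * q < 1/2"
    using exists_weight_with_minority_precision[OF assms] .
  define p where "p = lam * x + (1 - lam) * q"
  have p: "0 \<le> p" "p < 1/2" using subcritical assms lam x unfolding p_def by auto
  obtain K0 where K0: "\<And>K. K0 \<le> K \<Longrightarrow> majority_mass K p + tie_mass K p < x / 2"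
    using order_tendstoD(2)[OF majority_plus_tie_tendsto_zero[OF p], of "x / 2"] x
    by (auto simp: eventually_sequentially)
  define C0 where "C0 = nat \<lceil>2 * q / x\<rceil>"
  have C0: "q / (1 + real C) < x / 2" if "C0 \<le> C" for C
  proof -
    have "2 * q / x \<le> real C" using that unfolding C0_def by linarith
    then show ?thesis using x by (simp add: field_simps)
  qed
  show ?thesis
  proof (rule that)
    fix K C assume "K0 \<le> K" "C0 \<le> C"
    have "phi_maj q K C lam x \<le> q / (1 + real C) + (majority_mass K p + tie_mass K p)"
      using assms p unfolding p_def by (intro phi_maj_le) auto
    also have "\<dots> < x" using K0[OF \<open>K0 \<le> K\<close>] C0[OF \<open>C0 \<le> C\<close>] by linarith
    finally have "lambda_star q K C \<le> ereal lam"
      using assms lam x by (intro lambda_star_le) auto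
    then show "lambda_star q K C \<le> ereal lbar" using lam by (simp add: order_trans)
  qed
qed

theorem proposition5:
  shows "(\<forall>q::real. \<forall>K C::nat. 1/2 < q \<and> q < 1 \<and> 1 \<le> K \<and> 1 \<le> C \<and> 2 * C \<le> K
            \<longrightarrow> lambda_star q K C > ereal (1 - 1 / (2 * q)))
       \<and> (\<forall>q::real. 1/2 < q \<and> q < 1 \<longrightarrow>
            (\<forall>lbar::real. lbar > 1 - 1 / (2 * q) \<longrightarrow>
              (\<exists>K0 C0::nat. \<forall>K C::nat. K0 \<le> K \<and> C0 \<le> C \<and> 1 \<le> C \<and> 2 * C \<le> K
                 \<longrightarrow> lambda_star q K C \<le> ereal lbar)))"
proof (intro conjI allI impI)
  fix q :: real and K C :: nat
  assume "1/2 < q \<and> q < 1 \<and> 1 \<le> K \<and> 1 \<le> C \<and> 2 * C \<le> K"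
  then show "lambda_star q K C > ereal (1 - 1 / (2 * q))"
    by (intro lambda_star_gt_threshold) auto
next
  fix q lbar :: real
  assume "1/2 < q \<and> q < 1" "lbar > 1 - 1 / (2 * q)"
  then obtain K0 C0 :: nat where "\<And>K C. K0 \<le> K \<Longrightarrow> C0 \<le> C \<Longrightarrow> lambda_star q K C \<le> ereal lbar"
    by (meson lambda_star_le_for_large_K_C)
  then show "\<exists>K0 C0::nat. \<forall>K C::nat. K0 \<le> K \<and> C0 \<le> C \<and> 1 \<le> C \<and> 2 * C \<le> K
      \<longrightarrow> lambda_star q K C \<le> ereal lbar"
    by blast
qed

end
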